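(* A preordered group $(G,P_G)$ is a commutative object of the (unital) category $\mathsf{PreOrdGrp}$ if and only if $G$ is abelian. Consequently, the category $\mathsf{ComMon}(\mathsf{PreOrdGrp})$ of internal commutative monoids in $\mathsf{PreOrdGrp}$ coincides with $\mathsf{PreOrdAb}$.
   Context: A preordered group is a pair $(G,P_G)$ with $G$ an additively written group and $P_G\subseteq G$ a submonoid closed under conjugation; morphisms are group homomorphisms $f$ with $f(P_G)\subseteq P_H$. This is $\mathsf{PreOrdGrp}$; products are $(G\times H,P_G\times P_H)$. $\mathsf{PreOrdAb}$ is the full subcategory with $G$ abelian. $\mathsf{PreOrdGrp}$ is a unital category (pointed, finitely complete, and for all $X,Y$ the pair $l_X=\langle 1_X,0\rangle\colon X\to X\times Y$, $r_Y=\langle 0,1_Y\rangle\colon Y\to X\times Y$ is jointly strongly epimorphic). In a unital category an object $X$ is commutative if there is a morphism $\phi\colon X\times X\to X$ with $\phi\circ l_X=1_X=\phi\circ r_X$; in a unital category, the commutative objects form exactly the full subcategory of internal commutative monoids. *)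

theory Defs
  imports "HOL-Algebra.Algebra"
begin

text \<open>Preordered groups (G, P): G a group (written multiplicatively in HOL-Algebra,
  additively in the paper), P a submonoid of G closed under conjugation.\<close>

definition preordered_group :: "('a, 'b) monoid_scheme \<Rightarrow> 'a set \<Rightarrow> bool" where
  "preordered_group G P \<longleftrightarrow>
     group G \<and> P \<subseteq> carrier G \<and> \<one>\<^bsub>G\<^esub> \<in> P \<and>
     (\<forall>p\<in>P. \<forall>q\<in>P. p \<otimes>\<^bsub>G\<^esub> q \<in> P) \<and>
     (\<forall>g\<in>carrier G. \<forall>p\<in>P. g \<otimes>\<^bsub>G\<^esub> p \<otimes>\<^bsub>G\<^esub> inv\<^bsub>G\<^esub> g \<in> P)"

definition preord_hom ::
  "('a, 'b) monoid_scheme \<Rightarrow> 'a set \<Rightarrow> ('c, 'd) monoid_scheme \<Rightarrow> 'c set \<Rightarrow> ('a \<Rightarrow> 'c) set" where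
  "preord_hom G P H Q = {f. f \<in> hom G H \<and> f ` P \<subseteq> Q}"

text \<open>Commutative object in the unital category PreOrdGrp: there is a morphism
  \<phi> : X \<times> X \<rightarrow> X (product (G \<times>\<times> G, P \<times> P)) with \<phi> \<circ> l_X = 1_X = \<phi> \<circ> r_X,
  where l_X = <1_X, 0>, r_X = <0, 1_X>.  Equalities of morphisms are equalities on the carrier.\<close>

definition commutative_object :: "('a, 'b) monoid_scheme \<Rightarrow> 'a set \<Rightarrow> bool" where
  "commutative_object G P \<longleftrightarrow>
     (\<exists>\<phi> \<in> preord_hom (G \<times>\<times> G) (P \<times> P) G P.
        \<forall>x\<in>carrier G. \<phi> (x, \<one>\<^bsub>G\<^esub>) = x \<and> \<phi> (\<one>\<^bsub>G\<^esub>, x) = x)"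

definition unit_grp :: "unit monoid" where
  "unit_grp = \<lparr>carrier = {()}, monoid.mult = (\<lambda>_ _. ()), one = ()\<rparr>"

definition internal_comm_monoid ::
  "('a, 'b) monoid_scheme \<Rightarrow> 'a set \<Rightarrow> ('a \<times> 'a \<Rightarrow> 'a) \<Rightarrow> (unit \<Rightarrow> 'a) \<Rightarrow> bool" where
  "internal_comm_monoid G P m e \<longleftrightarrow>
     m \<in> preord_hom (G \<times>\<times> G) (P \<times> P) G P \<and>
     e \<in> preord_hom unit_grp {()} G P \<and>
     (\<forall>x\<in>carrier G. m (e (), x) = x \<and> m (x, e ()) = x) \<and>
     (\<forall>x\<in>carrier G. \<forall>y\<in>carrier G. \<forall>z\<in>carrier G. m (m (x, y), z) = m (x, m (y, z))) \<and>
     (\<forall>x\<in>carrier G. \<forall>y\<in>carrier G. m (x, y) = m (y, x))"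

definition in_ComMon :: "('a, 'b) monoid_scheme \<Rightarrow> 'a set \<Rightarrow> bool" where
  "in_ComMon G P \<longleftrightarrow> (\<exists>m e. internal_comm_monoid G P m e)"

end

theory Submission
  imports Defs
begin

text \<open>Eckmann-Hilton: if \<phi> : G \<times> G \<rightarrow> G is a homomorphism with \<phi>(x,1) = x = \<phi>(1,x), then
  \<phi>(x,y) = \<phi>((x,1)(1,y)) = xy and also \<phi>(x,y) = \<phi>((1,y)(x,1)) = yx, so G is abelian.
  Conversely the multiplication of an abelian group is such a homomorphism, and it maps
  P \<times> P into P because P is a submonoid; it is even an internal commutative monoid, whose unit
  1 \<rightarrow> G is forced to be the identity since a homomorphism from the trivial group into a group
  hits an idempotent.\<close>

lemma comm_monoid_if_unital_hom_DirProd: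
  fixes G (structure)
  assumes "monoid G" and \<phi>: "\<phi> \<in> hom (G \<times>\<times> G) G"
    and unital: "\<And>x. x \<in> carrier G \<Longrightarrow> \<phi> (x, \<one>) = x \<and> \<phi> (\<one>, x) = x"
  shows "comm_monoid G"
proof -
  interpret monoid G by fact
  have hom_mult_pairs: "\<phi> (a \<otimes> c, b \<otimes> d) = \<phi> (a, b) \<otimes> \<phi> (c, d)"
    if "a \<in> carrier G" "b \<in> carrier G" "c \<in> carrier G" "d \<in> carrier G" for a b c d
    using hom_mult[OF \<phi>, of "(a, b)" "(c, d)"] that by simp
  show ?thesis
  proof (rule monoid_comm_monoidI)
    fix x y assume x: "x \<in> carrier G" and y: "y \<in> carrier G"
    have "x \<otimes> y = \<phi> (x \<otimes> \<one>, \<one> \<otimes> y)"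
      using hom_mult_pairs[of x \<one> \<one> y] x y unital by simp
    also have "\<dots> = \<phi> (\<one> \<otimes> x, y \<otimes> \<one>)"
      using x y by simp
    also have "\<dots> = y \<otimes> x"
      using hom_mult_pairs[of \<one> y x \<one>] x y unital by simp
    finally show "x \<otimes> y = y \<otimes> x" .
  qed
qed

lemma (in comm_monoid) mult_in_hom_DirProd:
  "(\<lambda>p. fst p \<otimes> snd p) \<in> hom (G \<times>\<times> G) G"
  by (rule homI) (auto simp: m_ac)

lemma (in group) hom_unit_grp_eq_one:
  assumes "e \<in> hom unit_grp G"
  shows "e () = \<one>"
proof -
  have "e () \<in> carrier G"
    using assms by (auto simp: hom_def unit_grp_def)
  moreover have "e () \<otimes> e () = e ()"
    using assms by (auto simp: hom_def unit_grp_def)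
  ultimately show ?thesis
    by simp
qed

lemma commutative_object_imp_comm_group:
  assumes "group G" and "commutative_object G P"
  shows "comm_group G"
proof -
  obtain \<phi> where "\<phi> \<in> hom (G \<times>\<times> G) G"
    and "\<forall>x\<in>carrier G. \<phi> (x, \<one>\<^bsub>G\<^esub>) = x \<and> \<phi> (\<one>\<^bsub>G\<^esub>, x) = x"
    using assms(2) by (auto simp: commutative_object_def preord_hom_def)
  then have "comm_monoid G"
    using assms(1) by (intro comm_monoid_if_unital_hom_DirProd) (auto intro: group.is_monoid)
  with assms(1) show ?thesis
    by (simp add: comm_group_def)
qed

lemma comm_group_imp_in_ComMon:
  fixes G (structure)
  assumes "preordered_group G P" and "comm_group G"
  shows "in_ComMon G P"
proof -
  interpret comm_group G by fact
  have "internal_comm_monoid G P (\<lambda>p. fst p \<otimes> snd p) (\<lambda>_. \<one>)"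
    using assms(1) mult_in_hom_DirProd
    by (auto simp: internal_comm_monoid_def preord_hom_def preordered_group_def
        hom_def unit_grp_def m_assoc m_comm)
  then show ?thesis
    unfolding in_ComMon_def by blast
qed

lemma in_ComMon_imp_commutative_object:
  assumes "group G" and "in_ComMon G P"
  shows "commutative_object G P"
proof -
  obtain m e where m: "internal_comm_monoid G P m e"
    using assms(2) unfolding in_ComMon_def by blast
  then have "e () = \<one>\<^bsub>G\<^esub>"
    using group.hom_unit_grp_eq_one[OF assms(1)]
    by (auto simp: internal_comm_monoid_def preord_hom_def)
  with m show ?thesis
    unfolding commutative_object_def internal_comm_monoid_def by auto
qed

theorem proposition3p6:
  fixes G :: "('a, 'b) monoid_scheme" and P :: "'a set"
  assumes "preordered_group G P"
  shows "(commutative_object G P \<longleftrightarrow> comm_group G) \<and> (in_ComMon G P \<longleftrightarrow> comm_group G)"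
proof -
  have "group G"
    using assms by (simp add: preordered_group_def)
  then show ?thesis
    using assms commutative_object_imp_comm_group comm_group_imp_in_ComMon
      in_ComMon_imp_commutative_object
    by blast
qed

end
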